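(* Let $n\ge 2$ and let $\sigma_1\in G_n$ be the automorphism with $\sigma_1(y_1y_2)=-y_1y_2$ and $\sigma_1(y_jy_{j+1})=y_jy_{j+1}$ for $2\le j\le n-1$. Then $(\mathrm{EC}_n-1)(\sigma_1(\mathrm{EC}_n)-1)=(x_1-\mathrm{EC}_{n-1}(x_2,\dots,x_n))^2$.
   Context: Let $x_1,\dots,x_n$ be algebraically independent indeterminates over $\mathbb{Q}$; in an algebraic closure fix $y_j$ with $y_j^2=1-x_j^2$. For indices $i_1<\dots<i_m$, $\mathrm{EC}_m(x_{i_1},\dots,x_{i_m})=\sum_{S\subseteq\{i_1,\dots,i_m\},\ |S|\text{ even}}(-1)^{|S|/2}\prod_{j\in S}y_j\prod_{j\notin S}x_j$, and $\mathrm{EC}_n=\mathrm{EC}_n(x_1,\dots,x_n)$. $G_n$ is the Galois group of $\mathbb{Q}(x_1,\dots,x_n,\ y_iy_j:1\le i<j\le n)$ over $\mathbb{Q}(x_1,\dots,x_n)$. *)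

theory Defs
  imports Main "HOL-Computational_Algebra.Polynomial"
begin

definition is_subfield :: "'a::field set \<Rightarrow> bool" where
  "is_subfield S \<longleftrightarrow> 0 \<in> S \<and> 1 \<in> S \<and>
     (\<forall>a\<in>S. \<forall>b\<in>S. a + b \<in> S \<and> a * b \<in> S) \<and>
     (\<forall>a\<in>S. - a \<in> S \<and> inverse a \<in> S)"

definition gen_subfield :: "'a::field set \<Rightarrow> 'a set" where
  "gen_subfield A = \<Inter> {S. is_subfield S \<and> A \<subseteq> S}"

text \<open>Automorphism group of the field L fixing the subfield K pointwise
  (the Galois group Gal(L/K)); automorphisms are represented by functions
  on the ambient type whose restriction to L is a field automorphism.\<close>
definition aut_group :: "'a::field set \<Rightarrow> 'a set \<Rightarrow> ('a \<Rightarrow> 'a) set" where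
  "aut_group L K = {\<sigma>. bij_betw \<sigma> L L \<and>
      (\<forall>a\<in>L. \<forall>b\<in>L. \<sigma> (a + b) = \<sigma> a + \<sigma> b \<and> \<sigma> (a * b) = \<sigma> a * \<sigma> b) \<and>
      (\<forall>a\<in>K. \<sigma> a = a)}"

text \<open>A polynomial is a finitely supported coefficient function on exponent
  vectors supported in I.\<close>
definition alg_indep_rat :: "(nat \<Rightarrow> 'a::field_char_0) \<Rightarrow> nat set \<Rightarrow> bool" where
  "alg_indep_rat X I \<longleftrightarrow>
     (\<forall>p :: (nat \<Rightarrow> nat) \<Rightarrow> rat.
        finite {m. p m \<noteq> 0} \<and> (\<forall>m. p m \<noteq> 0 \<longrightarrow> (\<forall>i. i \<notin> I \<longrightarrow> m i = 0)) \<and>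
        (\<Sum>m\<in>{m. p m \<noteq> 0}. of_rat (p m) * (\<Prod>i\<in>I. X i ^ m i)) = 0
        \<longrightarrow> (\<forall>m. p m = 0))"

definition EC :: "nat set \<Rightarrow> (nat \<Rightarrow> 'a::comm_ring_1) \<Rightarrow> (nat \<Rightarrow> 'a) \<Rightarrow> 'a" where
  "EC I x y = (\<Sum>S\<in>{S. S \<subseteq> I \<and> even (card S)}.
      (-1) ^ (card S div 2) * (\<Prod>j\<in>S. y j) * (\<Prod>j\<in>I - S. x j))"

end

theory Submission imports Defs begin

(* Write z = x_1 + i y_1, w = x_1 - i y_1 with i^2 = -1, and
   Q = prod_{j>=2} (x_j + i y_j), R = prod_{j>=2} (x_j - i y_j).  Expanding the
   products gives 2 EC_n = zQ + wR and 2 EC_{n-1}(x_2,..,x_n) = Q + R, and since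
   y_j^2 = 1 - x_j^2 we have zw = QR = 1.  The automorphism sigma_1 acts on EC_n
   as the substitution y_1 -> -y_1, i.e. it swaps z and w: sigma_1(2 EC_n) = wQ + zR. *)

lemma is_subfield_gen_subfield: "is_subfield (gen_subfield A)"
  unfolding is_subfield_def gen_subfield_def by auto

lemma gen_subfield_superset: "A \<subseteq> gen_subfield A"
  unfolding gen_subfield_def by auto

lemma gen_subfield_mono: "A \<subseteq> B \<Longrightarrow> gen_subfield A \<subseteq> gen_subfield B"
  unfolding gen_subfield_def by auto

context
  fixes L :: "'a::field set"
  assumes L: "is_subfield L"
begin

lemma subfield_1: "1 \<in> L"
  using L unfolding is_subfield_def by blast

lemma subfield_add: "a \<in> L \<Longrightarrow> b \<in> L \<Longrightarrow> a + b \<in> L"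
  using L unfolding is_subfield_def by blast

lemma subfield_mult: "a \<in> L \<Longrightarrow> b \<in> L \<Longrightarrow> a * b \<in> L"
  using L unfolding is_subfield_def by blast

lemma subfield_uminus: "a \<in> L \<Longrightarrow> - a \<in> L"
  using L unfolding is_subfield_def by blast

lemma subfield_inverse: "a \<in> L \<Longrightarrow> inverse a \<in> L"
  using L unfolding is_subfield_def by blast

lemma subfield_diff: "a \<in> L \<Longrightarrow> b \<in> L \<Longrightarrow> a - b \<in> L"
  using subfield_add[of a "- b"] subfield_uminus[of b] by simp

lemma subfield_power: "a \<in> L \<Longrightarrow> a ^ k \<in> L"
  by (induction k) (simp_all add: subfield_1 subfield_mult)

lemma subfield_prod: "(\<And>s. s \<in> F \<Longrightarrow> f s \<in> L) \<Longrightarrow> prod f F \<in> L"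
  by (induction F rule: infinite_finite_induct) (simp_all add: subfield_1 subfield_mult)

lemma subfield_sum: "(\<And>s. s \<in> F \<Longrightarrow> f s \<in> L) \<Longrightarrow> sum f F \<in> L"
  using L by (induction F rule: infinite_finite_induct)
    (simp_all add: subfield_add is_subfield_def)

end

section \<open>Field homomorphisms fixing a subfield\<close>

locale fixing_hom =
  fixes L K :: "'a::field set" and \<sigma> :: "'a \<Rightarrow> 'a"
  assumes subfield_L: "is_subfield L" and subfield_K: "is_subfield K"
    and K_sub_L: "K \<subseteq> L"
    and hom_add: "a \<in> L \<Longrightarrow> b \<in> L \<Longrightarrow> \<sigma> (a + b) = \<sigma> a + \<sigma> b"
    and hom_mult: "a \<in> L \<Longrightarrow> b \<in> L \<Longrightarrow> \<sigma> (a * b) = \<sigma> a * \<sigma> b"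
    and fixes_K: "a \<in> K \<Longrightarrow> \<sigma> a = a"

lemma aut_group_fixing_hom:
  assumes "\<sigma> \<in> aut_group (gen_subfield (A \<union> B)) (gen_subfield A)"
  shows "fixing_hom (gen_subfield (A \<union> B)) (gen_subfield A) \<sigma>"
  using assms unfolding aut_group_def
  by unfold_locales (auto simp: is_subfield_gen_subfield gen_subfield_mono)

context fixing_hom
begin

lemma hom_1: "\<sigma> 1 = 1"
  using fixes_K subfield_1[OF subfield_K] by blast

lemma hom_0: "\<sigma> 0 = 0"
  using fixes_K subfield_K unfolding is_subfield_def by blast

lemma hom_sum: "finite F \<Longrightarrow> (\<And>s. s \<in> F \<Longrightarrow> f s \<in> L) \<Longrightarrow> \<sigma> (sum f F) = (\<Sum>s\<in>F. \<sigma> (f s))"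
  by (induction F rule: finite_induct)
    (simp_all add: hom_0 hom_add subfield_sum[OF subfield_L])

lemma hom_prod: "finite F \<Longrightarrow> (\<And>s. s \<in> F \<Longrightarrow> f s \<in> L) \<Longrightarrow> \<sigma> (prod f F) = (\<Prod>s\<in>F. \<sigma> (f s))"
  by (induction F rule: finite_induct)
    (simp_all add: hom_1 hom_mult subfield_prod[OF subfield_L])

text \<open>If \<open>\<sigma>\<close> fixes \<open>uv\<close> and \<open>vw\<close>, and \<open>v\<^sup>2\<close> is a nonzero element of \<open>K\<close>,
  then \<open>\<sigma>\<close> fixes \<open>uw = (uv)(vw)/v\<^sup>2\<close>.\<close>

lemma fixed_product_trans:
  assumes uv: "u * v \<in> L" "\<sigma> (u * v) = u * v"
    and vw: "v * w \<in> L" "\<sigma> (v * w) = v * w"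
    and vv: "v * v \<in> K" "v * v \<noteq> 0"
  shows "u * w \<in> L \<and> \<sigma> (u * w) = u * w"
proof -
  have "inverse (v * v) \<in> K" by (rule subfield_inverse[OF subfield_K vv(1)])
  then have inv: "inverse (v * v) \<in> L" "\<sigma> (inverse (v * v)) = inverse (v * v)"
    using K_sub_L fixes_K by blast+
  have uw: "u * w = (u * v) * (v * w) * inverse (v * v)"
    using vv(2) by (simp add: field_simps)
  have "u * w \<in> L"
    unfolding uw by (rule subfield_mult[OF subfield_L subfield_mult[OF subfield_L uv(1) vw(1)] inv(1)])
  moreover have "\<sigma> (u * w) = u * w"
    unfolding uw hom_mult[OF subfield_mult[OF subfield_L uv(1) vw(1)] inv(1)]
      hom_mult[OF uv(1) vw(1)] uv(2) vw(2) inv(2) ..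
  ultimately show ?thesis ..
qed

lemma fixed_along_chain:
  fixes y :: "nat \<Rightarrow> 'a" and a m j :: nat
  assumes chain: "\<And>j. a \<le> j \<Longrightarrow> j < m \<Longrightarrow>
      y j * y (j + 1) \<in> L \<and> \<sigma> (y j * y (j + 1)) = y j * y (j + 1)"
    and squares: "\<And>j. a \<le> j \<Longrightarrow> j \<le> m \<Longrightarrow> y j * y j \<in> K \<and> y j * y j \<noteq> 0"
    and j: "a \<le> j" "j \<le> m"
  shows "y a * y j \<in> L \<and> \<sigma> (y a * y j) = y a * y j"
  using j
proof (induction j rule: dec_induct)
  case base
  then show ?case using squares[of a] K_sub_L fixes_K by auto
next
  case (step j)
  then show ?case
    using fixed_product_trans[of "y a" "y j" "y (j + 1)"] chain[of j] squares[of j] by simp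
qed

text \<open>Suppose some \<open>y\<^sub>b\<close> has nonzero square in \<open>K\<close> and \<open>\<sigma>(y\<^sub>b y\<^sub>j) = y\<^sub>b y'\<^sub>j\<close>
  for all \<open>j \<in> I\<close>.  Then \<open>\<sigma>\<close> maps each product of an even number of \<open>y\<^sub>j\<close>
  to the corresponding product of the \<open>y'\<^sub>j\<close>, because such a product equals
  \<open>(y\<^sub>b\<^sup>2)\<^sup>-\<^sup>k \<Prod>(y\<^sub>b y\<^sub>j)\<close> with \<open>2k\<close> factors.\<close>

lemma hom_even_prod:
  assumes b: "y b * y b \<in> K" "y b * y b \<noteq> 0"
    and twist: "\<And>j. j \<in> I \<Longrightarrow> y b * y j \<in> L \<and> \<sigma> (y b * y j) = y b * y' j"
    and S: "S \<subseteq> I" "finite S" "even (card S)"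
  shows "(\<Prod>j\<in>S. y j) \<in> L \<and> \<sigma> (\<Prod>j\<in>S. y j) = (\<Prod>j\<in>S. y' j)"
proof -
  define c where "c = y b * y b"
  obtain k where k: "card S = 2 * k" using S(3) by (rule evenE)
  have "c \<noteq> 0" using b(2) by (simp add: c_def)
  then have "inverse c ^ k * c ^ k = 1" by (simp add: power_mult_distrib[symmetric])
  moreover have "y b ^ card S = c ^ k"
    unfolding c_def k power_mult power2_eq_square ..
  ultimately have ck: "inverse c ^ k * (y b ^ card S) = 1" by simp
  have split: "(\<Prod>j\<in>S. f j) = inverse c ^ k * (\<Prod>j\<in>S. y b * f j)" for f
    by (simp add: prod.distrib mult.assoc[symmetric] ck)
  have ickK: "inverse c ^ k \<in> K"
    using b unfolding c_def
    by (intro subfield_power[OF subfield_K] subfield_inverse[OF subfield_K])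
  then have ickL: "inverse c ^ k \<in> L" using K_sub_L by blast
  have factors: "(\<Prod>j\<in>S. y b * y j) \<in> L"
    using twist S(1) by (intro subfield_prod[OF subfield_L]) blast
  have "\<sigma> (\<Prod>j\<in>S. y j) = inverse c ^ k * (\<Prod>j\<in>S. \<sigma> (y b * y j))"
    unfolding split[of y] using ickK ickL factors twist S
    by (simp add: hom_mult hom_prod fixes_K subset_iff)
  also have "\<dots> = (\<Prod>j\<in>S. y' j)"
    unfolding split[of y'] using twist S(1) by (intro arg_cong2[where f = "(*)"] prod.cong) auto
  finally show ?thesis
    unfolding split[of y] using ickL factors subfield_mult[OF subfield_L] by blast
qed

lemma hom_EC:
  assumes I: "finite I" and b: "y b * y b \<in> K" "y b * y b \<noteq> 0"
    and twist: "\<And>j. j \<in> I \<Longrightarrow> y b * y j \<in> L \<and> \<sigma> (y b * y j) = y b * y' j"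
    and xK: "\<And>j. j \<in> I \<Longrightarrow> x j \<in> K"
  shows "\<sigma> (EC I x y) = EC I x y'"
proof -
  define F where "F = {S. S \<subseteq> I \<and> even (card S)}"
  define summand where "summand = (\<lambda>v S. (-1) ^ (card S div 2) * (\<Prod>j\<in>S. v j) * (\<Prod>j\<in>I - S. x j))"
  have finF: "finite F" unfolding F_def using I by (rule rev_finite_subset[OF finite_Pow_iff[THEN iffD2]]) auto
  have coeffK: "(-1) ^ (card S div 2) \<in> K" "(\<Prod>j\<in>I - S. x j) \<in> K" for S
    using xK by (auto intro!: subfield_power[OF subfield_K] subfield_uminus[OF subfield_K]
        subfield_1[OF subfield_K] subfield_prod[OF subfield_K])
  have summand: "summand y S \<in> L \<and> \<sigma> (summand y S) = summand y' S" if "S \<in> F" for S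
  proof -
    have S: "S \<subseteq> I" "finite S" "even (card S)"
      using that I finite_subset unfolding F_def by auto
    note prodS = hom_even_prod[where y = y and y' = y', OF b twist S]
    have L: "(-1) ^ (card S div 2) \<in> L" "(\<Prod>j\<in>I - S. x j) \<in> L"
      using coeffK K_sub_L by blast+
    show ?thesis
      unfolding summand_def using prodS L coeffK
      by (simp add: hom_mult fixes_K subfield_mult[OF subfield_L])
  qed
  have EC_sum: "EC I x v = sum (summand v) F" for v
    unfolding EC_def F_def summand_def ..
  have "\<sigma> (EC I x y) = (\<Sum>S\<in>F. \<sigma> (summand y S))"
    unfolding EC_sum using summand by (intro hom_sum finF) blast
  also have "\<dots> = EC I x y'"
    unfolding EC_sum using summand by (intro sum.cong) auto
  finally show ?thesis .
qed

lemma sign_change_on_products: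
  fixes y :: "nat \<Rightarrow> 'a"
  assumes n: "2 \<le> n"
    and squares: "\<And>j. j \<in> {1..n} \<Longrightarrow> y j * y j \<in> K \<and> y j * y j \<noteq> 0"
    and products: "\<And>i j. 1 \<le> i \<Longrightarrow> i < j \<Longrightarrow> j \<le> n \<Longrightarrow> y i * y j \<in> L"
    and s12: "\<sigma> (y 1 * y 2) = - (y 1 * y 2)"
    and sj: "\<forall>j. 2 \<le> j \<and> j \<le> n - 1 \<longrightarrow> \<sigma> (y j * y (j + 1)) = y j * y (j + 1)"
    and j: "j \<in> {1..n}"
  shows "y 2 * y j \<in> L \<and> \<sigma> (y 2 * y j) = y 2 * (y(1 := - y 1)) j"
proof (cases "j = 1")
  case True
  then show ?thesis using products[of 1 2] n s12 by (simp add: mult.commute)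
next
  case False
  have "y 2 * y j \<in> L \<and> \<sigma> (y 2 * y j) = y 2 * y j"
  proof (rule fixed_along_chain)
    show "y k * y (k + 1) \<in> L \<and> \<sigma> (y k * y (k + 1)) = y k * y (k + 1)"
      if "2 \<le> k" "k < n" for k
      using that products[of k "k + 1"] sj by auto
  qed (use squares j False in auto)
  then show ?thesis using False by simp
qed

end

section \<open>The algebraic identity\<close>

lemma power_add_power_minus:
  fixes i :: "'a::comm_ring_1"
  assumes i2: "i ^ 2 = -1"
  shows "i ^ k + (-i) ^ k = (if even k then 2 * (-1) ^ (k div 2) else 0)"
proof (cases "even k")
  case True
  then obtain m where k: "k = 2 * m" by (rule evenE)
  have "i ^ k = (-1) ^ m" "(-i) ^ k = (-1) ^ m"
    by (simp_all only: k power_mult power2_minus i2)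
  then show ?thesis using True k by simp
next
  case False
  then show ?thesis by (simp add: power_minus_odd)
qed

text \<open>With \<open>i\<^sup>2 = -1\<close>, \<open>EC\<close> is the average of two conjugate products:
  \<open>2 EC = \<Prod>(x\<^sub>j + i y\<^sub>j) + \<Prod>(x\<^sub>j - i y\<^sub>j)\<close>; only even subsets survive.\<close>

lemma EC_conjugate_products:
  fixes i :: "'a::comm_ring_1"
  assumes i2: "i ^ 2 = -1" and fin: "finite I"
  shows "2 * EC I x y = (\<Prod>j\<in>I. x j + i * y j) + (\<Prod>j\<in>I. x j - i * y j)"
proof -
  have expand: "(\<Prod>j\<in>I. x j + u * y j) = (\<Sum>S\<in>Pow I. u ^ card S * (\<Prod>j\<in>S. y j) * (\<Prod>j\<in>I - S. x j))"
    for u :: 'a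
    by (subst add.commute, subst prod_add[OF fin])
      (simp add: prod.distrib mult.assoc)
  have "(\<Prod>j\<in>I. x j + i * y j) + (\<Prod>j\<in>I. x j - i * y j)
      = (\<Sum>S\<in>Pow I. (i ^ card S + (-i) ^ card S) * (\<Prod>j\<in>S. y j) * (\<Prod>j\<in>I - S. x j))"
    using expand[of i] expand[of "-i"] by (simp add: sum.distrib[symmetric] algebra_simps)
  also have "\<dots> = (\<Sum>S\<in>Pow I. if even (card S)
      then 2 * ((-1) ^ (card S div 2) * (\<Prod>j\<in>S. y j) * (\<Prod>j\<in>I - S. x j)) else 0)"
    by (rule sum.cong) (auto simp: power_add_power_minus[OF i2])
  also have "\<dots> = 2 * EC I x y"
    unfolding EC_def sum.inter_filter[OF finite_Pow_iff[THEN iffD2, OF fin], symmetric]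
    by (simp add: sum_distrib_left Pow_def)
  finally show ?thesis by simp
qed

lemma flip_identity:
  fixes z w Q R :: "'a::field_char_0"
  assumes "z * w = 1" "Q * R = 1"
  shows "((z * Q + w * R) / 2 - 1) * ((w * Q + z * R) / 2 - 1) = ((z + w) / 2 - (Q + R) / 2) ^ 2"
proof -
  have "4 * (((z * Q + w * R) / 2 - 1) * ((w * Q + z * R) / 2 - 1))
      = 4 * ((z + w) / 2 - (Q + R) / 2) ^ 2
        + (z * w - 1) * (Q ^ 2 + R ^ 2 - 2) + (Q * R - 1) * (z ^ 2 + w ^ 2 - 2)"
    by (simp add: field_simps power2_eq_square)
  then show ?thesis using assms by simp
qed

lemma EC_sign_flip:
  fixes x y :: "nat \<Rightarrow> 'a::field_char_0" and i :: 'a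
  assumes i2: "i ^ 2 = -1" and J: "finite J" "a \<notin> J"
    and ysq: "\<And>j. j \<in> insert a J \<Longrightarrow> y j ^ 2 = 1 - x j ^ 2"
  shows "(EC (insert a J) x y - 1) * (EC (insert a J) x (y(a := - y a)) - 1)
       = (x a - EC J x y) ^ 2"
proof -
  define z where "z = x a + i * y a"
  define w where "w = x a - i * y a"
  define Q where "Q = (\<Prod>j\<in>J. x j + i * y j)"
  define R where "R = (\<Prod>j\<in>J. x j - i * y j)"
  have unit: "(x j + i * y j) * (x j - i * y j) = 1" if "j \<in> insert a J" for j
  proof -
    have "(x j + i * y j) * (x j - i * y j) = x j ^ 2 - i ^ 2 * y j ^ 2"
      by (simp add: algebra_simps power2_eq_square)
    then show ?thesis using ysq[OF that] i2 by simp
  qed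
  have zw: "z * w = 1" unfolding z_def w_def using unit by blast
  have QR: "Q * R = 1" unfolding Q_def R_def prod.distrib[symmetric] using unit by simp
  have same_on_J: "(\<Prod>j\<in>J. x j + u * (y(a := - y a)) j) = (\<Prod>j\<in>J. x j + u * y j)" for u
    using J(2) by (intro prod.cong) auto
  have "2 * EC (insert a J) x y = z * Q + w * R"
    unfolding EC_conjugate_products[OF i2 finite_insert[THEN iffD2, OF J(1)]]
    by (simp add: J z_def w_def Q_def R_def)
  then have EC: "EC (insert a J) x y = (z * Q + w * R) / 2" by (simp add: eq_divide_eq mult.commute)
  have "2 * EC (insert a J) x (y(a := - y a)) = w * Q + z * R"
    unfolding EC_conjugate_products[OF i2 finite_insert[THEN iffD2, OF J(1)]]
    using same_on_J[of i] same_on_J[of "-i"] by (simp add: J z_def w_def Q_def R_def)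
  then have EC_flipped: "EC (insert a J) x (y(a := - y a)) = (w * Q + z * R) / 2" by (simp add: eq_divide_eq mult.commute)
  have "2 * EC J x y = Q + R"
    unfolding Q_def R_def by (rule EC_conjugate_products[OF i2 J(1)])
  then have EC_J: "EC J x y = (Q + R) / 2" by (simp add: eq_divide_eq mult.commute)
  have xa: "x a = (z + w) / 2" by (simp add: z_def w_def)
  show ?thesis
    unfolding EC EC_flipped EC_J xa by (rule flip_identity[OF zw QR])
qed

section \<open>Algebraic independence\<close>

lemma alg_indep_square_ne_one:
  fixes X :: "nat \<Rightarrow> 'a::field_char_0"
  assumes ind: "alg_indep_rat X I" and k: "k \<in> I" and fin: "finite I"
  shows "X k ^ 2 \<noteq> 1"
proof
  assume h: "X k ^ 2 = 1"
  define m2 where "m2 = (\<lambda>i. if i = k then 2 else (0::nat))"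
  define m0 where "m0 = (\<lambda>i::nat. (0::nat))"
  have ne: "m2 \<noteq> m0" by (metis m2_def m0_def zero_neq_numeral)
  define p where "p = (\<lambda>m. if m = m2 then 1 else if m = m0 then -1 else (0::rat))"
  have supp: "{m. p m \<noteq> 0} = {m2, m0}" using ne by (auto simp: p_def)
  have "(\<Prod>i\<in>I. X i ^ m2 i) = (\<Prod>i\<in>I. if i = k then X k ^ 2 else 1)"
    by (rule prod.cong) (auto simp: m2_def)
  then have pr2: "(\<Prod>i\<in>I. X i ^ m2 i) = X k ^ 2" using fin k by simp
  have "(\<Sum>m\<in>{m. p m \<noteq> 0}. of_rat (p m) * (\<Prod>i\<in>I. X i ^ m i)) = X k ^ 2 - 1"
    unfolding supp using ne pr2 by (simp add: p_def m0_def)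
  then have vanish: "(\<Sum>m\<in>{m. p m \<noteq> 0}. of_rat (p m) * (\<Prod>i\<in>I. X i ^ m i)) = 0"
    using h by simp
  have support: "\<forall>m. p m \<noteq> 0 \<longrightarrow> (\<forall>i. i \<notin> I \<longrightarrow> m i = 0)"
  proof (intro allI impI)
    fix m i assume "p m \<noteq> 0" "i \<notin> I"
    then have "m \<in> {m2, m0}" "i \<noteq> k" using supp k by auto
    then show "m i = 0" by (auto simp: m2_def m0_def)
  qed
  have "finite {m. p m \<noteq> 0}" unfolding supp by simp
  then have "\<forall>m. p m = 0"
    using ind support vanish unfolding alg_indep_rat_def by blast
  then show False by (metis p_def one_neq_zero)
qed

lemma square_in_subfield_nonzero:
  fixes x y :: "nat \<Rightarrow> 'a::field_char_0"
  assumes ind: "alg_indep_rat x I" "finite I" "k \<in> I"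
    and ysq: "y k ^ 2 = 1 - x k ^ 2"
    and K: "is_subfield K" "x k \<in> K"
  shows "y k * y k \<in> K \<and> y k * y k \<noteq> 0"
proof
  have yy: "y k * y k = 1 - x k * x k" using ysq by (simp add: power2_eq_square)
  then show "y k * y k \<in> K"
    using K by (simp add: subfield_diff subfield_1 subfield_mult)
  show "y k * y k \<noteq> 0"
    using alg_indep_square_ne_one[OF ind(1,3,2)] yy by (simp add: power2_eq_square)
qed

theorem mainTheorem8:
  fixes x y :: "nat \<Rightarrow> 'a::{alg_closed_field, field_char_0}"
    and n :: nat and \<sigma>\<^sub>1 :: "'a \<Rightarrow> 'a"
  assumes n2: "n \<ge> 2"
    and indep: "alg_indep_rat x {1..n}"
    and ysq: "\<forall>j\<in>{1..n}. y j ^ 2 = 1 - x j ^ 2"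
    and G: "\<sigma>\<^sub>1 \<in> aut_group
              (gen_subfield (x ` {1..n} \<union> {y i * y j | i j. 1 \<le> i \<and> i < j \<and> j \<le> n}))
              (gen_subfield (x ` {1..n}))"
    and s12: "\<sigma>\<^sub>1 (y 1 * y 2) = - (y 1 * y 2)"
    and sj: "\<forall>j. 2 \<le> j \<and> j \<le> n - 1 \<longrightarrow> \<sigma>\<^sub>1 (y j * y (j + 1)) = y j * y (j + 1)"
  shows "(EC {1..n} x y - 1) * (\<sigma>\<^sub>1 (EC {1..n} x y) - 1) = (x 1 - EC {2..n} x y) ^ 2"
proof -
  let ?A = "x ` {1..n}" and ?B = "{y i * y j | i j. 1 \<le> i \<and> i < j \<and> j \<le> n}"
  interpret fixing_hom "gen_subfield (?A \<union> ?B)" "gen_subfield ?A" \<sigma>\<^sub>1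
    using G by (rule aut_group_fixing_hom)
  have xK: "x j \<in> gen_subfield ?A" if "j \<in> {1..n}" for j
    using that gen_subfield_superset by blast
  have squares: "y j * y j \<in> gen_subfield ?A \<and> y j * y j \<noteq> 0" if "j \<in> {1..n}" for j
    using square_in_subfield_nonzero[OF indep finite_atLeastAtMost that _ subfield_K xK[OF that]]
      ysq that by blast
  have products: "y i * y j \<in> gen_subfield (?A \<union> ?B)" if "1 \<le> i" "i < j" "j \<le> n" for i j
  proof -
    have "y i * y j \<in> ?B" using that by blast
    then show ?thesis using gen_subfield_superset[of "?A \<union> ?B"] by blast
  qed
  have sq2: "y 2 * y 2 \<in> gen_subfield ?A" "y 2 * y 2 \<noteq> 0" using squares[of 2] n2 by auto
  have twist: "y 2 * y j \<in> gen_subfield (?A \<union> ?B) \<and> \<sigma>\<^sub>1 (y 2 * y j) = y 2 * (y(1 := - y 1)) j"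
    if "j \<in> {1..n}" for j
    using sign_change_on_products[where y = y and n = n and j = j] n2 squares products s12 sj that
    by blast
  have sigma_EC: "\<sigma>\<^sub>1 (EC {1..n} x y) = EC {1..n} x (y(1 := - y 1))"
    by (rule hom_EC[where y = y and b = 2, OF finite_atLeastAtMost sq2 twist xK])
  obtain i :: 'a where i2: "i ^ 2 = -1" using nth_root_exists[of 2 "-1"] by auto
  have index_split: "{1..n} = insert 1 {2..n}" using n2 by auto
  show ?thesis
    unfolding sigma_EC unfolding index_split
    by (rule EC_sign_flip[OF i2 finite_atLeastAtMost]) (use ysq n2 in auto)
qed

end
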